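(* For each regular cardinal $\kappa$, a complete bounded distributive lattice $A$ is $\kappa$-proHeyting if and only if it is a $\kappa$-frame; that is, $\mathbf{C}\kappa\mathbf{proH}=\mathbf{C}\kappa\mathbf{Frm}$.
   Context: For a meet-semilattice $A$: $\mathcal{DM} A$ is the complete lattice of normal ideals; an existing join $\bigvee S$ is distributive if $a\wedge\bigvee S=\bigvee\{a\wedge s:s\in S\}$ for all $a$; $\mathcal{BL} A$ is the frame of D-ideals (downsets containing $\bigvee S$ for every subset $S$ of them with distributive join), and $\mathcal{DM} A\subseteq\mathcal{BL} A$. $\mathcal{BL}_\kappa(\mathcal{DM} A)$ is the sub-$\kappa$-frame of $\mathcal{BL} A$ generated by $\mathcal{DM} A$ (closure under finite meets and joins of fewer than $\kappa$ elements in $\mathcal{BL} A$). $A$ is $\kappa$-proHeyting if $\mathcal{BL}_\kappa(\mathcal{DM} A)=\mathcal{DM} A$; $A$ is a $\kappa$-frame if all joins of fewer than $\kappa$ elements exist and are distributive. $\mathbf{C}\kappa\mathbf{proH}$ and $\mathbf{C}\kappa\mathbf{Frm}$ denote the classes of complete bounded distributive lattices that are $\kappa$-proHeyting, respectively $\kappa$-frames. *)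

theory Defs
  imports Main
begin

definition ubs :: "'a::complete_lattice set \<Rightarrow> 'a set" where
  "ubs S = {x. \<forall>s\<in>S. s \<le> x}"

definition lbs :: "'a::complete_lattice set \<Rightarrow> 'a set" where
  "lbs S = {x. \<forall>s\<in>S. x \<le> s}"

(* DM A: the normal ideals (Dedekind-MacNeille completion) *)
definition DM :: "'a::complete_lattice set set" where
  "DM = {I. lbs (ubs I) = I}"

definition is_downset :: "'a::complete_lattice set \<Rightarrow> bool" where
  "is_downset I \<longleftrightarrow> (\<forall>x y. y \<in> I \<longrightarrow> x \<le> y \<longrightarrow> x \<in> I)"

definition distributive_join :: "'a::complete_lattice set \<Rightarrow> bool" where
  "distributive_join S \<longleftrightarrow> (\<forall>a. inf a (Sup S) = Sup {inf a s | s. s \<in> S})"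

definition D_ideal :: "'a::complete_lattice set \<Rightarrow> bool" where
  "D_ideal I \<longleftrightarrow> is_downset I \<and>
     (\<forall>S. S \<subseteq> I \<longrightarrow> distributive_join S \<longrightarrow> Sup S \<in> I)"

(* BL A: the frame of D-ideals, ordered by inclusion *)
definition BL :: "'a::complete_lattice set set" where
  "BL = {I. D_ideal I}"

definition BL_join :: "'a::complete_lattice set set \<Rightarrow> 'a set" where
  "BL_join F = \<Inter>{J \<in> BL. \<Union>F \<subseteq> J}"

(* A family X of D-ideals closed under finite meets and joins (in BL A) of
   fewer than kappa elements; kappa is a cardinal given as a well-order r *)
definition kappa_closed :: "'k rel \<Rightarrow> 'a::complete_lattice set set \<Rightarrow> bool" where
  "kappa_closed r X \<longleftrightarrow> X \<subseteq> BL \<and> UNIV \<in> X \<and>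
     (\<forall>I\<in>X. \<forall>J\<in>X. I \<inter> J \<in> X) \<and>
     (\<forall>F. F \<subseteq> X \<longrightarrow> ordLess2 (card_of F) r \<longrightarrow> BL_join F \<in> X)"

definition BL_kappa_DM :: "'k rel \<Rightarrow> 'a::complete_lattice set set" where
  "BL_kappa_DM r = \<Inter>{X. DM \<subseteq> X \<and> kappa_closed r X}"

definition kappa_proHeyting :: "'k rel \<Rightarrow> 'a::complete_lattice itself \<Rightarrow> bool" where
  "kappa_proHeyting r _ \<longleftrightarrow> (BL_kappa_DM r :: 'a set set) = DM"

definition kappa_frame :: "'k rel \<Rightarrow> 'a::complete_lattice itself \<Rightarrow> bool" where
  "kappa_frame r _ \<longleftrightarrow> (\<forall>S :: 'a set. ordLess2 (card_of S) r \<longrightarrow> distributive_join S)"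

end

theory Submission
  imports Defs
begin

text \<open>In a complete lattice the normal ideals are exactly the principal downsets
  \<open>{..a}\<close>, so \<open>A\<close> is \<open>\<kappa>\<close>-proHeyting iff the join in \<open>BL A\<close> of fewer than \<open>\<kappa>\<close>
  principal downsets \<open>{..s}\<close>, \<open>s \<in> S\<close>, is again principal. If \<open>Sup S\<close> is
  distributive, every D-ideal containing \<open>S\<close> contains \<open>Sup S\<close>, so that join is
  \<open>{..Sup S}\<close>. Conversely, for any \<open>a\<close> the set \<open>{x. x \<sqinter> a \<le> Sup {a \<sqinter> s | s \<in> S}}\<close>
  is a D-ideal containing \<open>S\<close>; if the join is principal, this D-ideal contains its
  generator, which lies above \<open>Sup S\<close>, and distributivity follows.\<close>

lemma DM_iff_atMost: "(I::'a::complete_lattice set) \<in> DM \<longleftrightarrow> (\<exists>a. I = {..a})"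
proof
  assume "I \<in> DM"
  moreover have "ubs I = {Sup I..}"
    by (auto simp: ubs_def intro: Sup_least Sup_upper order_trans)
  ultimately have "I = {..Sup I}"
    by (auto simp: DM_def lbs_def)
  then show "\<exists>a. I = {..a}" ..
next
  assume "\<exists>a. I = {..a}"
  then obtain a where "I = {..a}" ..
  moreover have "ubs {..a} = {a..}"
    by (auto simp: ubs_def intro: order_trans)
  ultimately show "I \<in> DM"
    by (auto simp: DM_def lbs_def)
qed

lemma DM_eq_atMost_Sup_image:
  assumes "F \<subseteq> (DM :: 'a::complete_lattice set set)"
  shows "F = atMost ` Sup ` F"
proof -
  have "I = {..Sup I}" if "I \<in> F" for I
    using that assms by (metis DM_iff_atMost Sup_atMost subsetD)
  then show ?thesis
    by (auto simp: image_image)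
qed

lemma atMost_in_BL: "{..a::'a::complete_lattice} \<in> BL"
  by (auto simp: BL_def D_ideal_def is_downset_def intro: Sup_least order_trans)

lemma Inter_in_BL: "G \<subseteq> BL \<Longrightarrow> \<Inter>G \<in> BL"
  by (simp add: BL_def D_ideal_def is_downset_def subset_eq) blast

lemma BL_join_in_BL: "BL_join F \<in> BL"
  unfolding BL_join_def by (rule Inter_in_BL) auto

lemma BL_join_least: "J \<in> BL \<Longrightarrow> \<Union>F \<subseteq> J \<Longrightarrow> BL_join F \<subseteq> J"
  by (auto simp: BL_join_def)

lemma BL_join_upper: "\<Union>F \<subseteq> BL_join F"
  by (auto simp: BL_join_def)

lemma inf_le_in_BL: "{x. inf x a \<le> (b::'a::complete_lattice)} \<in> BL"
  unfolding BL_def D_ideal_def is_downset_def mem_Collect_eq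
proof (intro conjI allI impI)
  fix x y assume "inf y a \<le> b" "x \<le> y"
  then show "inf x a \<le> b"
    by (meson inf_mono order_refl order_trans)
next
  fix T assume T: "T \<subseteq> {x. inf x a \<le> b}" "distributive_join T"
  have "inf (Sup T) a = Sup {inf a t | t. t \<in> T}"
    using T(2) by (simp add: distributive_join_def inf_commute)
  also have "\<dots> \<le> b"
    using T(1) by (auto intro!: Sup_least simp: inf_commute)
  finally show "inf (Sup T) a \<le> b" .
qed

lemma BL_join_atMost_image:
  assumes "distributive_join (S::'a::complete_lattice set)"
  shows "BL_join (atMost ` S) = {..Sup S}"
proof
  show "BL_join (atMost ` S) \<subseteq> {..Sup S}"
    by (rule BL_join_least[OF atMost_in_BL]) (auto intro: order_trans Sup_upper)
next
  have "S \<subseteq> BL_join (atMost ` S)"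
    using BL_join_upper[of "atMost ` S"] by auto
  then have "Sup S \<in> BL_join (atMost ` S)"
    using BL_join_in_BL assms by (auto simp: BL_def D_ideal_def)
  then show "{..Sup S} \<subseteq> BL_join (atMost ` S)"
    using BL_join_in_BL by (auto simp: BL_def D_ideal_def is_downset_def)
qed

lemma distributive_join_if_BL_join_atMost_image_in_DM:
  assumes "BL_join (atMost ` S) \<in> (DM :: 'a::complete_lattice set set)"
  shows "distributive_join S"
  unfolding distributive_join_def
proof
  fix a
  define M where "M = Sup {inf a s | s. s \<in> S}"
  obtain c where c: "BL_join (atMost ` S) = {..c}"
    using assms by (auto simp: DM_iff_atMost)
  have "Sup S \<le> c"
    using BL_join_upper[of "atMost ` S"] c by (auto intro: Sup_least)
  moreover have "BL_join (atMost ` S) \<subseteq> {x. inf x a \<le> M}"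
  proof (rule BL_join_least[OF inf_le_in_BL], safe)
    fix x s assume "s \<in> S" "x \<le> s"
    then have "inf x a \<le> inf a s"
      by (simp add: le_infI1 le_infI2)
    also have "\<dots> \<le> M"
      unfolding M_def using \<open>s \<in> S\<close> by (blast intro: Sup_upper)
    finally show "inf x a \<le> M" .
  qed
  ultimately have "inf a (Sup S) \<le> M"
    using c by (auto simp: inf_commute intro: order_trans inf_mono)
  moreover have "M \<le> inf a (Sup S)"
    unfolding M_def
  proof (rule Sup_least, safe)
    fix s assume "s \<in> S"
    then show "inf a s \<le> inf a (Sup S)"
      by (intro inf_mono order_refl Sup_upper)
  qed
  ultimately show "inf a (Sup S) = M"
    by (rule antisym)
qed

lemma BL_join_atMost_image_in_DM_iff:
  "BL_join (atMost ` S) \<in> (DM :: 'a::complete_lattice set set) \<longleftrightarrow> distributive_join S"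
  by (metis DM_iff_atMost BL_join_atMost_image
      distributive_join_if_BL_join_atMost_image_in_DM)

lemma kappa_proHeyting_iff_BL_join_in_DM:
  "kappa_proHeyting r TYPE('a::complete_lattice) \<longleftrightarrow>
     (\<forall>F \<subseteq> (DM :: 'a set set). ordLess2 (card_of F) r \<longrightarrow> BL_join F \<in> DM)"
proof
  assume "kappa_proHeyting r TYPE('a)"
  then show "\<forall>F \<subseteq> (DM :: 'a set set). ordLess2 (card_of F) r \<longrightarrow> BL_join F \<in> DM"
    by (auto simp: kappa_proHeyting_def BL_kappa_DM_def kappa_closed_def)
next
  assume "\<forall>F \<subseteq> (DM :: 'a set set). ordLess2 (card_of F) r \<longrightarrow> BL_join F \<in> DM"
  moreover have "(DM :: 'a set set) \<subseteq> BL"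
    using atMost_in_BL by (auto simp: DM_iff_atMost)
  moreover have "UNIV \<in> (DM :: 'a set set)"
    by (auto simp: DM_iff_atMost intro: exI[of _ top])
  moreover have "{..a} \<inter> {..b} = {..inf a b}" for a b :: 'a
    by auto
  then have "I \<inter> J \<in> DM" if "I \<in> DM" "J \<in> DM" for I J :: "'a set"
    using that by (metis DM_iff_atMost)
  ultimately have "kappa_closed r (DM :: 'a set set)"
    by (simp add: kappa_closed_def)
  then show "kappa_proHeyting r TYPE('a)"
    by (auto simp: kappa_proHeyting_def BL_kappa_DM_def)
qed

lemma BL_join_in_DM_iff_atMost_image:
  "(\<forall>F \<subseteq> (DM :: 'a::complete_lattice set set). ordLess2 (card_of F) r \<longrightarrow> BL_join F \<in> DM) \<longleftrightarrow>
   (\<forall>S :: 'a set. ordLess2 (card_of S) r \<longrightarrow> BL_join (atMost ` S) \<in> DM)"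
proof (intro iffI allI impI)
  fix S :: "'a set"
  assume hyp: "\<forall>F \<subseteq> (DM :: 'a set set). ordLess2 (card_of F) r \<longrightarrow> BL_join F \<in> DM"
    and "ordLess2 (card_of S) r"
  have "atMost ` S \<subseteq> DM"
    by (auto simp: DM_iff_atMost)
  moreover have "ordLess2 (card_of (atMost ` S)) r"
    using \<open>ordLess2 (card_of S) r\<close> by (rule ordLeq_ordLess_trans[OF card_of_image])
  ultimately show "BL_join (atMost ` S) \<in> DM"
    by (rule hyp[rule_format])
next
  fix F :: "'a set set"
  assume hyp: "\<forall>S :: 'a set. ordLess2 (card_of S) r \<longrightarrow> BL_join (atMost ` S) \<in> DM"
    and "F \<subseteq> DM" "ordLess2 (card_of F) r"
  have "ordLess2 (card_of (Sup ` F)) r"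
    using \<open>ordLess2 (card_of F) r\<close> by (rule ordLeq_ordLess_trans[OF card_of_image])
  then have "BL_join (atMost ` Sup ` F) \<in> DM"
    by (rule hyp[rule_format])
  then show "BL_join F \<in> DM"
    using DM_eq_atMost_Sup_image[OF \<open>F \<subseteq> DM\<close>] by argo
qed

theorem proposition4p12:
  fixes r :: "'k rel"
  assumes "Cinfinite r" and "regularCard r"
  shows "kappa_proHeyting r TYPE('a::{complete_lattice, distrib_lattice})
     \<longleftrightarrow> kappa_frame r TYPE('a)"
  unfolding kappa_proHeyting_iff_BL_join_in_DM BL_join_in_DM_iff_atMost_image
    BL_join_atMost_image_in_DM_iff kappa_frame_def ..

end
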